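(* Assume the setting described in the context with $d=1$ (so $\mathfrak{d}=3H+1$), and let $\alpha,\beta\in\mathbb{R}$, $\rho\in(0,\infty)$ satisfy $\mu(E)=\rho\lambda(E)$ for all $E\in\mathcal{B}([\mathscr{a},\mathscr{b}])$ and $f(x)=\alpha x+\beta$ for all $x\in[\mathscr{a},\mathscr{b}]$. Then (i) there exists $\vartheta\in\mathbb{R}^{\mathfrak{d}}$ such that $\mathcal{L}(\vartheta)=\inf_{\theta\in\mathbb{R}^{\mathfrak{d}}}\mathcal{L}(\theta)=0$, and (ii) for all $\theta\in\mathbb{R}^{\mathfrak{d}}$ with $\mathcal{G}(\theta)=0$ and $\mathcal{L}(\theta)>0$ it holds that $\mathcal{L}(\theta)\ge\frac{\rho\alpha^2(\mathscr{b}-\mathscr{a})^3}{12(2\lfloor H/2\rfloor+1)^4}$.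
   Context: Setting: $d,H,\mathfrak{d}\in\mathbb{N}$ with $\mathfrak{d}=dH+2H+1$, $\mathscr{a}\in\mathbb{R}$, $\mathscr{b}\in(\mathscr{a},\infty)$, $f\in C([\mathscr{a},\mathscr{b}]^d,\mathbb{R})$. For $\theta=(\theta_1,\dots,\theta_{\mathfrak{d}})\in\mathbb{R}^{\mathfrak{d}}$, $i\in\{1,\dots,H\}$, $j\in\{1,\dots,d\}$ put $\mathfrak{w}^\theta_{i,j}=\theta_{(i-1)d+j}$, $\mathfrak{b}^\theta_i=\theta_{Hd+i}$, $\mathfrak{v}^\theta_i=\theta_{H(d+1)+i}$, $\mathfrak{c}^\theta=\theta_{\mathfrak{d}}$. Let $\mathfrak{R}_r\in C^1(\mathbb{R},\mathbb{R})$, $r\in\mathbb{N}$, satisfy for all $x\in\mathbb{R}$ that $\lim_{r\to\infty}\big(|\mathfrak{R}_r(x)-\max\{x,0\}|+|(\mathfrak{R}_r)'(x)-\mathbb{1}_{(0,\infty)}(x)|\big)=0$ and $\sup_{r\in\mathbb{N}}\sup_{y\in[-|x|,|x|]}|(\mathfrak{R}_r)'(y)|<\infty$. Let $\mu$ be a finite measure on $\mathcal{B}([\mathscr{a},\mathscr{b}]^d)$ and $\lambda$ the Lebesgue–Borel measure on $[\mathscr{a},\mathscr{b}]^d$. For $\theta\in\mathbb{R}^{\mathfrak{d}}$, $x\in\mathbb{R}^d$ let $\mathscr{N}^\theta(x)=\mathfrak{c}^\theta+\sum_{i=1}^H\mathfrak{v}^\theta_i\max\{\mathfrak{b}^\theta_i+\sum_{j=1}^d\mathfrak{w}^\theta_{i,j}x_j,0\}$,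 $\mathcal{L}(\theta)=\int_{[\mathscr{a},\mathscr{b}]^d}(f(y)-\mathscr{N}^\theta(y))^2\,\mu(\mathrm{d}y)$, and for $r\in\mathbb{N}$, $\mathfrak{L}_r(\theta)=\int_{[\mathscr{a},\mathscr{b}]^d}\big(f(y)-\mathfrak{c}^\theta-\sum_{i=1}^H\mathfrak{v}^\theta_i\,\mathfrak{R}_r(\mathfrak{b}^\theta_i+\sum_{j=1}^d\mathfrak{w}^\theta_{i,j}y_j)\big)^2\,\mu(\mathrm{d}y)$. Let $\mathcal{G}\colon\mathbb{R}^{\mathfrak{d}}\to\mathbb{R}^{\mathfrak{d}}$ satisfy $\mathcal{G}(\theta)=\lim_{r\to\infty}(\nabla\mathfrak{L}_r)(\theta)$ for every $\theta$ for which this limit exists. $\lfloor\cdot\rfloor$ is the floor function. *)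

theory Defs
  imports "HOL-Analysis.Analysis"
begin

text \<open>Parameter vectors theta in R^(3H+1) are represented as functions nat => real,
  of which only the coordinates 1..3H+1 are used:
  w_i = theta i, b_i = theta (H+i), v_i = theta (2H+i), c = theta (3H+1).\<close>

definition relu_net1 :: "nat \<Rightarrow> (nat \<Rightarrow> real) \<Rightarrow> real \<Rightarrow> real" where
  "relu_net1 H \<theta> x = \<theta> (3*H+1) + (\<Sum>i=1..H. \<theta> (2*H+i) * max (\<theta> (H+i) + \<theta> i * x) 0)"

definition risk1 :: "real measure \<Rightarrow> (real \<Rightarrow> real) \<Rightarrow> nat \<Rightarrow> (nat \<Rightarrow> real) \<Rightarrow> real" where
  "risk1 M f H \<theta> = (\<integral>y. (f y - relu_net1 H \<theta> y)\<^sup>2 \<partial>M)"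

definition risk1_approx :: "real measure \<Rightarrow> (real \<Rightarrow> real) \<Rightarrow> nat \<Rightarrow> (real \<Rightarrow> real) \<Rightarrow> (nat \<Rightarrow> real) \<Rightarrow> real" where
  "risk1_approx M f H Rr \<theta> =
     (\<integral>y. (f y - \<theta> (3*H+1) - (\<Sum>i=1..H. \<theta> (2*H+i) * Rr (\<theta> (H+i) + \<theta> i * y)))\<^sup>2 \<partial>M)"

definition risk1_approx_grad :: "real measure \<Rightarrow> (real \<Rightarrow> real) \<Rightarrow> nat \<Rightarrow> (real \<Rightarrow> real) \<Rightarrow> (nat \<Rightarrow> real) \<Rightarrow> nat \<Rightarrow> real" where
  "risk1_approx_grad M f H Rr \<theta> k = deriv (\<lambda>t. risk1_approx M f H Rr (\<theta>(k := t))) (\<theta> k)"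

end

(*
  Write e for the network minus the target.  At a point where the limiting gradient vanishes,
  int e = 0, and for every neuron with nonzero outer weight the integrals of e and of y e over
  the region where the neuron is active vanish.  The kinks of these neurons inside (a, b) cut
  [a, b] into m + 1 <= H + 1 pieces on which e is affine.  Each kink bounds an active region, so
  e has mean zero on every piece; by continuity its values at the knots alternate,
  e(x_j) = (-1)^j e(a), and int e^2 = e(a)^2 (b - a) / 3.  The first moments int_a^{x_j} y e take
  only the values 0 and P = int_a^b y e and change on every piece, so they alternate too: m is
  even, P ~= 0, and all pieces have the same length (b - a) / (m + 1).  Summing the slopes of e
  over the pieces with alternating signs, each neuron contributes zero and the target -alpha;
  this gives e(a) = alpha (b - a) / (2 (m + 1)^2), hence int e^2 = alpha^2 (b - a)^3 / (12 (m + 1)^4)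
  with m + 1 <= 2 floor(H / 2) + 1.  The limiting gradient is obtained by differentiating under
  the integral sign and dominated convergence.
*)

theory Submission
  imports Defs
begin

lemma integral_quadratic:
  fixes p q r u v :: real
  assumes "u \<le> v"
  shows "integral {u..v} (\<lambda>y. p + q*y + r*y^2) = p*(v-u) + q*(v^2-u^2)/2 + r*(v^3-u^3)/3"
proof -
  have "((\<lambda>y. p + q*y + r*y^2) has_integral
      ((p * v + q * v^2/2 + r * v^3/3) - (p * u + q * u^2/2 + r * u^3/3))) {u..v}"
    by (rule fundamental_theorem_of_calculus[OF assms])
      (auto simp flip: has_real_derivative_iff_has_vector_derivative intro!: derivative_eq_intros)
  then show ?thesis by (simp add: integral_unique field_simps)
qed

lemma zero_mean_affine_on_interval:
  fixes e :: "real \<Rightarrow> real"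
  assumes uv: "u < v" and affine: "\<forall>y\<in>{u..v}. e y = p + q * y"
    and zero_mean: "integral {u..v} e = 0"
  shows "e u = - e v" and "e v = q * (v-u) / 2"
    and "integral {u..v} (\<lambda>y. (e y)^2) = (e v)^2 * (v-u) / 3"
    and "integral {u..v} (\<lambda>y. e y * y) = e v * (v-u)^2 / 6"
proof -
  have "integral {u..v} e = integral {u..v} (\<lambda>y. p + q*y + 0*y^2)"
    by (rule integral_cong) (simp add: affine)
  then have "(v-u) * (2*p + q*(u+v)) = 0"
    using zero_mean integral_quadratic[of u v p q 0] uv by (simp add: field_simps power2_eq_square)
  then have p: "p = - q*(u+v)/2" using uv by simp
  have eu: "e u = p + q * u" and ev: "e v = p + q * v" using affine uv by auto
  show "e u = - e v" "e v = q * (v-u) / 2" unfolding eu ev p by (simp_all add: field_simps)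
  have "integral {u..v} (\<lambda>y. (e y)^2) = integral {u..v} (\<lambda>y. p^2 + (2*p*q)*y + q^2*y^2)"
    by (rule integral_cong) (simp add: affine power2_eq_square algebra_simps)
  also have "\<dots> = (e v)^2 * (v-u) / 3"
    unfolding integral_quadratic[OF less_imp_le[OF uv]] ev p
    by (simp add: field_simps power2_eq_square power3_eq_cube)
  finally show "integral {u..v} (\<lambda>y. (e y)^2) = (e v)^2 * (v-u) / 3" .
  have "integral {u..v} (\<lambda>y. e y * y) = integral {u..v} (\<lambda>y. 0 + p*y + q*y^2)"
    by (rule integral_cong) (simp add: affine power2_eq_square algebra_simps)
  also have "\<dots> = e v * (v-u)^2 / 6"
    unfolding integral_quadratic[OF less_imp_le[OF uv]] ev p
    by (simp add: field_simps power2_eq_square power3_eq_cube)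
  finally show "integral {u..v} (\<lambda>y. e y * y) = e v * (v-u)^2 / 6" .
qed

lemma integral_partition_sum:
  fixes g :: "real \<Rightarrow> real" and x :: "nat \<Rightarrow> real"
  assumes g: "\<And>u v. g integrable_on {u..v}"
    and mono: "\<And>j k. j \<le> k \<Longrightarrow> k \<le> n \<Longrightarrow> x j \<le> x k"
  shows "integral {x 0..x n} g = (\<Sum>k<n. integral {x k..x (Suc k)} g)"
  using mono
proof (induction n)
  case (Suc n)
  have "integral {x 0..x n} g + integral {x n..x (Suc n)} g = integral {x 0..x (Suc n)} g"
    by (rule Henstock_Kurzweil_Integration.integral_combine) (use Suc.prems g in auto)
  then show ?case using Suc by simp
qed simp

lemma sorted_list_of_set_partition:
  fixes a b :: real and S :: "real set"
  defines "x \<equiv> \<lambda>j. sorted_list_of_set (insert a (insert b S)) ! j"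
  assumes S: "finite S" "S \<subseteq> {a<..<b}" and ab: "a < b"
  shows "x 0 = a" "x (card S + 1) = b"
    and "\<And>j k. j < k \<Longrightarrow> k \<le> card S + 1 \<Longrightarrow> x j < x k"
    and "x ` {1..card S} = S"
proof -
  let ?m = "card S"
  define T where "T = insert a (insert b S)"
  have abS: "a \<notin> S" "b \<notin> S" using S by auto
  have T: "finite T" "T \<subseteq> {a..b}" "card T = ?m + 2"
    unfolding T_def using S ab abS by auto
  have len: "length (sorted_list_of_set T) = ?m + 2" using T by simp
  have x_image: "x ` {..?m+1} = T"
  proof -
    have "x ` {..?m+1} = set (sorted_list_of_set T)"
      unfolding x_def T_def[symmetric] set_conv_nth len by auto
    then show ?thesis using T by simp
  qed
  show less: "\<And>j k. j < k \<Longrightarrow> k \<le> ?m + 1 \<Longrightarrow> x j < x k"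
    unfolding x_def T_def[symmetric]
    using sorted_wrt_nth_less[OF strict_sorted_list_of_set[of T]] len by auto
  have x_ab: "a \<le> x j \<and> x j \<le> b" if "j \<le> ?m + 1" for j
    using x_image T that by auto
  have "a \<in> x ` {..?m+1}" "b \<in> x ` {..?m+1}" unfolding x_image T_def by auto
  then obtain j0 j1 where j: "j0 \<le> ?m+1" "x j0 = a" "j1 \<le> ?m+1" "x j1 = b" by auto
  show x0: "x 0 = a"
  proof (rule ccontr)
    assume "x 0 \<noteq> a"
    then have "0 < j0" using j by (cases j0) auto
    then show False using less[of 0 j0] x_ab[of 0] j by auto
  qed
  show x1: "x (?m + 1) = b"
  proof (rule ccontr)
    assume "x (?m + 1) \<noteq> b"
    then have "j1 < ?m + 1" using j by (cases "j1 = ?m + 1") auto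
    then show False using less[of j1 "?m + 1"] x_ab[of "?m + 1"] j by auto
  qed
  have "inj_on x {..?m+1}"
  proof (rule linorder_inj_onI)
    fix i j :: nat assume "i < j" "j \<in> {..?m+1}"
    then show "x i \<noteq> x j" using less[of i j] by auto
  qed auto
  then have "x ` ({..?m+1} - {0, ?m+1}) = x ` {..?m+1} - x ` {0, ?m+1}"
    by (rule inj_on_image_set_diff) auto
  moreover have "{..?m+1} - {0, ?m+1} = {1..?m}" by auto
  ultimately show "x ` {1..?m} = S"
    using x_image x0 x1 abS unfolding T_def by auto
qed

lemma two_valued_steps_alternate:
  assumes "0 < n" "s 0 = A" "s n = B"
    and two_valued: "\<forall>j\<le>n. s j = A \<or> s j = B"
    and steps: "\<forall>j<n. s (Suc j) \<noteq> s j"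
  shows "A \<noteq> B" and "odd n" and "\<And>j. j \<le> n \<Longrightarrow> s j = (if even j then A else B)"
proof -
  show alt: "s j = (if even j then A else B)" if "j \<le> n" for j
    using that
  proof (induction j)
    case (Suc j)
    have "s (Suc j) \<noteq> s j" "s (Suc j) = A \<or> s (Suc j) = B"
      using steps two_valued Suc.prems by simp_all
    then show ?case using Suc by auto
  qed (simp add: assms)
  have "s 1 \<noteq> s 0" using steps assms(1) by simp
  then show "A \<noteq> B" using alt[of 1] assms(1,2) by simp
  then show "odd n" using alt[of n] assms(3) by auto
qed

lemma sum_neg_one_power_even_length:
  assumes "j \<le> n" "even (n - j)"
  shows "(\<Sum>k=j..<n. (-1::real)^k) = 0"
proof -
  obtain d where n: "n = j + 2*d" using assms by (metis evenE le_add_diff_inverse)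
  have "(\<Sum>k=j..<j + 2*d. (-1::real)^k) = 0"
  proof (induction d)
    case (Suc d)
    have "{j..<j + 2 * Suc d} = {j..<j + 2*d} \<union> {j + 2*d, j + 2*d + 1}" by auto
    then show ?case using Suc by simp
  qed simp
  then show ?thesis unfolding n .
qed

lemma max_affine_on_kink_free_interval:
  fixes c w u v y :: real
  assumes "u < v" "y \<in> {u..v}" and no_kink: "w \<noteq> 0 \<Longrightarrow> \<not> (u < -c/w \<and> -c/w < v)"
  shows "max (c + w * y) 0 = (if 0 < c + w * ((u+v)/2) then c + w * y else 0)"
proof (cases "w = 0")
  case False
  define t where "t = -c/w"
  have eq: "c + w * z = w * (z - t)" for z unfolding t_def using False by (simp add: field_simps)
  have "t \<le> u \<or> v \<le> t" using no_kink[OF False] unfolding t_def by auto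
  then show ?thesis unfolding eq using False assms(1,2)
    by (cases "w > 0") (auto simp: zero_less_mult_iff mult_le_0_iff max_def)
qed simp

lemma integral_indicator_affine_pos:
  fixes g :: "real \<Rightarrow> real"
  assumes "0 < w"
  shows "integral {a..b} (\<lambda>y. g y * indicator {0<..} (c + w * y)) = integral {max a (-c/w)..b} g"
proof -
  have "integral {a..b} (\<lambda>y. g y * indicator {0<..} (c + w * y))
      = integral {a..b} (\<lambda>y. if y \<in> {-c/w..} then g y else 0)"
  proof (rule integral_spike[where S = "{-c/w}"])
    fix y assume "y \<in> {a..b} - {-c/w}"
    then show "(if y \<in> {-c/w..} then g y else 0) = g y * indicator {0<..} (c + w * y)"
      using assms by (auto simp: indicator_def field_simps)
  qed simp
  also have "\<dots> = integral ({-c/w..} \<inter> {a..b}) g" by (rule integral_restrict_Int)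
  also have "{-c/w..} \<inter> {a..b} = {max a (-c/w)..b}" by auto
  finally show ?thesis .
qed

lemma integral_indicator_affine_neg:
  fixes g :: "real \<Rightarrow> real"
  assumes "w < 0"
  shows "integral {a..b} (\<lambda>y. g y * indicator {0<..} (c + w * y)) = integral {a..min b (-c/w)} g"
proof -
  have "integral {a..b} (\<lambda>y. g y * indicator {0<..} (c + w * y))
      = integral {a..b} (\<lambda>y. if y \<in> {..-c/w} then g y else 0)"
  proof (rule integral_spike[where S = "{-c/w}"])
    fix y assume "y \<in> {a..b} - {-c/w}"
    then show "(if y \<in> {..-c/w} then g y else 0) = g y * indicator {0<..} (c + w * y)"
      using assms by (auto simp: indicator_def field_simps)
  qed simp
  also have "\<dots> = integral ({..-c/w} \<inter> {a..b}) g" by (rule integral_restrict_Int)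
  also have "{..-c/w} \<inter> {a..b} = {a..min b (-c/w)}" by auto
  finally show ?thesis .
qed

section \<open>Critical points of the risk for an affine target\<close>

text \<open>The integral assumptions are the vanishing components of the limiting gradient for the outer
  bias and, for each neuron with \<open>v i \<noteq> 0\<close>, for its inner bias and inner weight.\<close>

locale relu_critical_point =
  fixes a b \<alpha> \<beta> c :: real and H :: nat and w bias v :: "nat \<Rightarrow> real" and e :: "real \<Rightarrow> real"
  assumes a_less_b: "a < b"
    and residual_eq: "\<And>y. e y = c + (\<Sum>i=1..H. v i * max (bias i + w i * y) 0) - (\<alpha> * y + \<beta>)"
    and integral_residual: "integral {a..b} e = 0"
    and integral_residual_active: "\<And>i. i \<in> {1..H} \<Longrightarrow> v i \<noteq> 0 \<Longrightarrow>
      integral {a..b} (\<lambda>y. e y * indicator {0<..} (bias i + w i * y)) = 0"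
    and integral_moment_active: "\<And>i. i \<in> {1..H} \<Longrightarrow> v i \<noteq> 0 \<Longrightarrow>
      integral {a..b} (\<lambda>y. e y * y * indicator {0<..} (bias i + w i * y)) = 0"
    and risk_pos: "0 < integral {a..b} (\<lambda>y. (e y)^2)"
begin

lemma continuous_on_residual: "continuous_on S e"
proof -
  have "e = (\<lambda>y. c + (\<Sum>i=1..H. v i * max (bias i + w i * y) 0) - (\<alpha> * y + \<beta>))"
    using residual_eq by blast
  then show ?thesis by (simp add: continuous_intros)
qed

lemma integrable_residual:
  "e integrable_on {u..u'}" "(\<lambda>y. e y * y) integrable_on {u..u'}"
  "(\<lambda>y. (e y)^2) integrable_on {u..u'}"
  by (auto intro!: integrable_continuous_real continuous_intros continuous_on_residual)

lemma integral_residual_split: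
  assumes "a \<le> t" "t \<le> b"
  shows "integral {a..t} e = - integral {t..b} e"
    and "integral {a..t} (\<lambda>y. e y * y) = integral {a..b} (\<lambda>y. e y * y) - integral {t..b} (\<lambda>y. e y * y)"
  using Henstock_Kurzweil_Integration.integral_combine[OF assms integrable_residual(1)]
    Henstock_Kurzweil_Integration.integral_combine[OF assms integrable_residual(2)]
    integral_residual by auto

definition moment :: "real \<Rightarrow> real" where
  "moment t = integral {a..t} (\<lambda>y. e y * y)"

lemma kink_of_increasing_neuron:
  assumes i: "i \<in> {1..H}" "v i \<noteq> 0" and w: "0 < w i" and t: "t = - bias i / w i"
  shows "a \<le> t \<Longrightarrow> t \<le> b \<Longrightarrow> integral {a..t} e = 0 \<and> moment t = moment b"
    and "t \<le> a \<Longrightarrow> moment b = 0"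
proof -
  have "integral {max a t..b} e = 0" "integral {max a t..b} (\<lambda>y. e y * y) = 0"
    using integral_residual_active[OF i] integral_moment_active[OF i]
      integral_indicator_affine_pos[OF w, of a b e "bias i"]
      integral_indicator_affine_pos[OF w, of a b "\<lambda>y. e y * y" "bias i"] t by simp_all
  then show "a \<le> t \<Longrightarrow> t \<le> b \<Longrightarrow> integral {a..t} e = 0 \<and> moment t = moment b"
    and "t \<le> a \<Longrightarrow> moment b = 0"
    using integral_residual_split[of t] by (simp_all add: moment_def max_def)
qed

lemma kink_of_decreasing_neuron:
  assumes i: "i \<in> {1..H}" "v i \<noteq> 0" and w: "w i < 0" and t: "t = - bias i / w i"
  shows "a \<le> t \<Longrightarrow> t \<le> b \<Longrightarrow> integral {a..t} e = 0 \<and> moment t = 0"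
    and "b \<le> t \<Longrightarrow> moment b = 0"
proof -
  have "integral {a..min b t} e = 0" "integral {a..min b t} (\<lambda>y. e y * y) = 0"
    using integral_residual_active[OF i] integral_moment_active[OF i]
      integral_indicator_affine_neg[OF w, of a b e "bias i"]
      integral_indicator_affine_neg[OF w, of a b "\<lambda>y. e y * y" "bias i"] t by simp_all
  then show "a \<le> t \<Longrightarrow> t \<le> b \<Longrightarrow> integral {a..t} e = 0 \<and> moment t = 0"
    and "b \<le> t \<Longrightarrow> moment b = 0"
    by (simp_all add: moment_def min_absorb2 min_absorb1)
qed

definition kinks :: "real set" where
  "kinks = {t. \<exists>i\<in>{1..H}. v i \<noteq> 0 \<and> w i \<noteq> 0 \<and> t = - bias i / w i \<and> a < t \<and> t < b}"

lemma finite_kinks: "finite kinks" and card_kinks_le: "card kinks \<le> H"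
proof -
  have sub: "kinks \<subseteq> (\<lambda>i. - bias i / w i) ` {1..H}" unfolding kinks_def by auto
  then show "finite kinks" by (rule finite_surj[rotated]) simp
  show "card kinks \<le> H"
    using card_mono[OF _ sub] card_image_le[of "{1..H}" "\<lambda>i. - bias i / w i"] by simp
qed

lemma kink_cases:
  assumes "t \<in> kinks"
  shows "integral {a..t} e = 0 \<and> (moment t = 0 \<or> moment t = moment b)"
proof -
  obtain i where i: "i \<in> {1..H}" "v i \<noteq> 0" and w: "w i \<noteq> 0"
    and t: "t = - bias i / w i" "a < t" "t < b"
    using assms unfolding kinks_def by blast
  consider "0 < w i" | "w i < 0" using w by linarith
  then show ?thesis
  proof cases
    case 1
    then show ?thesis using kink_of_increasing_neuron(1)[OF i 1 t(1)] t by simp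
  next
    case 2
    then show ?thesis using kink_of_decreasing_neuron(1)[OF i 2 t(1)] t by simp
  qed
qed

definition knot :: "nat \<Rightarrow> real" where
  "knot j = sorted_list_of_set (insert a (insert b kinks)) ! j"

lemma knot_0: "knot 0 = a"
  and knot_last: "knot (Suc (card kinks)) = b"
  and knot_less: "j < k \<Longrightarrow> k \<le> card kinks + 1 \<Longrightarrow> knot j < knot k"
  and knot_image: "knot ` {1..card kinks} = kinks"
proof -
  have "kinks \<subseteq> {a<..<b}" unfolding kinks_def by auto
  note partition = sorted_list_of_set_partition[OF finite_kinks this a_less_b, folded knot_def]
  show "knot 0 = a" "knot (Suc (card kinks)) = b" "knot ` {1..card kinks} = kinks"
    using partition(1,2,4) by simp_all
  show "j < k \<Longrightarrow> k \<le> card kinks + 1 \<Longrightarrow> knot j < knot k" using partition(3) .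
qed

lemma knot_le: "j \<le> k \<Longrightarrow> k \<le> card kinks + 1 \<Longrightarrow> knot j \<le> knot k"
  using knot_less[of j k] by (cases "j = k") auto

lemma knot_mem: "j \<le> card kinks + 1 \<Longrightarrow> knot j \<in> {a..b}"
  using knot_le[of 0 j] knot_le[of j "card kinks + 1"] knot_0 knot_last by auto

lemma knot_less_iff: "j \<le> card kinks + 1 \<Longrightarrow> k \<le> card kinks + 1 \<Longrightarrow> knot j < knot k \<longleftrightarrow> j < k"
  using knot_less knot_le by (meson not_le)

lemma no_kink_between_knots:
  assumes k: "k \<le> card kinks" and t: "t \<in> kinks"
  shows "\<not> (knot k < t \<and> t < knot (Suc k))"
proof
  assume between: "knot k < t \<and> t < knot (Suc k)"
  from t have "t \<in> knot ` {1..card kinks}" unfolding knot_image .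
  then obtain j where j: "j \<in> {1..card kinks}" "t = knot j" by blast
  then have "k < j" "j < Suc k" using between k knot_less_iff[of k j] knot_less_iff[of j "Suc k"] by auto
  then show False by simp
qed

definition active :: "nat \<Rightarrow> nat \<Rightarrow> bool" where
  "active i k \<longleftrightarrow> 0 < bias i + w i * ((knot k + knot (Suc k)) / 2)"

definition slope :: "nat \<Rightarrow> real" where
  "slope k = (\<Sum>i=1..H. if active i k then v i * w i else 0) - \<alpha>"

lemma residual_affine_on_piece:
  assumes k: "k \<le> card kinks"
  shows "\<exists>p. \<forall>y\<in>{knot k..knot (Suc k)}. e y = p + slope k * y"
proof (intro exI ballI)
  fix y assume y: "y \<in> {knot k..knot (Suc k)}"
  have neuron: "v i * max (bias i + w i * y) 0
      = (if active i k then v i * bias i else 0) + (if active i k then v i * w i else 0) * y"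
    if i: "i \<in> {1..H}" for i
  proof (cases "v i = 0")
    case False
    have "\<not> (knot k < - bias i / w i \<and> - bias i / w i < knot (Suc k))" if "w i \<noteq> 0"
    proof
      assume between: "knot k < - bias i / w i \<and> - bias i / w i < knot (Suc k)"
      then have "- bias i / w i \<in> kinks"
        using knot_mem[of k] knot_mem[of "Suc k"] k i False that unfolding kinks_def by force
      then show False using no_kink_between_knots[OF k] between by blast
    qed
    then have "max (bias i + w i * y) 0 = (if active i k then bias i + w i * y else 0)"
      unfolding active_def using max_affine_on_kink_free_interval[OF knot_less y] k by simp
    then show ?thesis by (simp add: algebra_simps)
  qed simp
  have "(\<Sum>i=1..H. v i * max (bias i + w i * y) 0)
      = (\<Sum>i=1..H. if active i k then v i * bias i else 0) + (\<Sum>i=1..H. if active i k then v i * w i else 0) * y"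
    by (simp add: neuron sum.distrib sum_distrib_right)
  then show "e y = (c + (\<Sum>i=1..H. if active i k then v i * bias i else 0) - \<beta>) + slope k * y"
    unfolding residual_eq slope_def by (simp add: algebra_simps)
qed

lemma integral_residual_knot: "j \<le> card kinks + 1 \<Longrightarrow> integral {a..knot j} e = 0"
  and moment_knot_cases: "j \<le> card kinks + 1 \<Longrightarrow> moment (knot j) = 0 \<or> moment (knot j) = moment b"
proof -
  assume j: "j \<le> card kinks + 1"
  consider "j = 0" | "j = card kinks + 1" | "knot j \<in> kinks"
    using j knot_image by fastforce
  then have "integral {a..knot j} e = 0 \<and> (moment (knot j) = 0 \<or> moment (knot j) = moment b)"
  proof cases
    case 1
    then show ?thesis by (simp add: knot_0 moment_def)
  next
    case 2
    then show ?thesis by (simp add: knot_last integral_residual moment_def)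
  qed (rule kink_cases)
  then show "integral {a..knot j} e = 0" "moment (knot j) = 0 \<or> moment (knot j) = moment b"
    by auto
qed

lemma residual_piece:
  assumes k: "k \<le> card kinks"
  shows "e (knot k) = - e (knot (Suc k))"
    and "e (knot (Suc k)) = slope k * (knot (Suc k) - knot k) / 2"
    and "integral {knot k..knot (Suc k)} (\<lambda>y. (e y)^2)
           = (e (knot (Suc k)))^2 * (knot (Suc k) - knot k) / 3"
    and "moment (knot (Suc k)) - moment (knot k) = e (knot (Suc k)) * (knot (Suc k) - knot k)^2 / 6"
proof -
  have a_le: "a \<le> knot k" and less: "knot k < knot (Suc k)"
    using knot_mem[of k] knot_less[of k "Suc k"] k by auto
  have combine: "integral {a..knot k} f + integral {knot k..knot (Suc k)} f = integral {a..knot (Suc k)} f"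
    if "\<And>u v. f integrable_on {u..v}" for f :: "real \<Rightarrow> real"
    by (rule Henstock_Kurzweil_Integration.integral_combine) (use a_le less that in auto)
  have mean_zero: "integral {knot k..knot (Suc k)} e = 0"
    using combine[OF integrable_residual(1)] integral_residual_knot[of k] integral_residual_knot[of "Suc k"] k
    by simp
  obtain p where "\<forall>y\<in>{knot k..knot (Suc k)}. e y = p + slope k * y"
    using residual_affine_on_piece[OF k] by blast
  note piece = zero_mean_affine_on_interval[OF less this mean_zero]
  show "e (knot k) = - e (knot (Suc k))"
    and "e (knot (Suc k)) = slope k * (knot (Suc k) - knot k) / 2"
    and "integral {knot k..knot (Suc k)} (\<lambda>y. (e y)^2) = (e (knot (Suc k)))^2 * (knot (Suc k) - knot k) / 3"
    using piece(1-3) .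
  show "moment (knot (Suc k)) - moment (knot k) = e (knot (Suc k)) * (knot (Suc k) - knot k)^2 / 6"
    using combine[OF integrable_residual(2)] piece(4) unfolding moment_def by simp
qed

lemma residual_knot_alternates: "j \<le> card kinks + 1 \<Longrightarrow> e (knot j) = (-1)^j * e a"
proof (induction j)
  case (Suc j)
  then show ?case using residual_piece(1)[of j] by simp
qed (simp add: knot_0)

lemma residual_knot_sq: "j \<le> card kinks + 1 \<Longrightarrow> (e (knot j))^2 = (e a)^2"
  by (simp add: residual_knot_alternates power_mult_distrib flip: power_mult)

lemma sum_piece_lengths: "(\<Sum>k\<le>card kinks. knot (Suc k) - knot k) = b - a"
  by (simp only: lessThan_Suc_atMost[symmetric] sum_lessThan_telescope) (simp add: knot_0 knot_last)

lemma integral_residual_sq: "integral {a..b} (\<lambda>y. (e y)^2) = (e a)^2 * (b - a) / 3"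
proof -
  have "integral {a..b} (\<lambda>y. (e y)^2) = (\<Sum>k\<le>card kinks. integral {knot k..knot (Suc k)} (\<lambda>y. (e y)^2))"
    using integral_partition_sum[OF integrable_residual(3), where x = knot and n = "Suc (card kinks)"] knot_le
    by (simp add: knot_0 knot_last lessThan_Suc_atMost)
  also have "\<dots> = (\<Sum>k\<le>card kinks. (e a)^2 / 3 * (knot (Suc k) - knot k))"
    by (rule sum.cong) (auto simp: residual_piece(3) residual_knot_sq)
  also have "\<dots> = (e a)^2 / 3 * (\<Sum>k\<le>card kinks. knot (Suc k) - knot k)"
    by (rule sum_distrib_left[symmetric])
  also have "\<dots> = (e a)^2 * (b - a) / 3"
    unfolding sum_piece_lengths by simp
  finally show ?thesis .
qed

lemma residual_a_nonzero: "e a \<noteq> 0"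
  using risk_pos unfolding integral_residual_sq by auto

lemma moment_step:
  assumes "k \<le> card kinks"
  shows "moment (knot (Suc k)) - moment (knot k) = (-1)^(Suc k) * e a * (knot (Suc k) - knot k)^2 / 6"
    and "moment (knot (Suc k)) \<noteq> moment (knot k)"
proof -
  show step: "moment (knot (Suc k)) - moment (knot k) = (-1)^(Suc k) * e a * (knot (Suc k) - knot k)^2 / 6"
    using residual_piece(4)[OF assms] residual_knot_alternates[of "Suc k"] assms by simp
  have "knot k < knot (Suc k)" using knot_less assms by simp
  then show "moment (knot (Suc k)) \<noteq> moment (knot k)"
    using step residual_a_nonzero by auto
qed

lemma moment_knot_alternates:
  shows "even (card kinks)" and "moment b \<noteq> 0"
    and "j \<le> card kinks + 1 \<Longrightarrow> moment (knot j) = (if even j then 0 else moment b)"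
proof -
  let ?s = "\<lambda>j. moment (knot j)"
  have ends: "?s 0 = 0" "?s (card kinks + 1) = moment b"
    by (simp_all add: knot_0 knot_last moment_def)
  have two_valued: "\<forall>j\<le>card kinks + 1. ?s j = 0 \<or> ?s j = moment b"
    using moment_knot_cases by blast
  have steps: "\<forall>j<card kinks + 1. ?s (Suc j) \<noteq> ?s j"
    using moment_step(2) by simp
  note alt = two_valued_steps_alternate[of "card kinks + 1", OF _ ends two_valued steps]
  show "even (card kinks)" "moment b \<noteq> 0" using alt(1,2) by auto
  show "j \<le> card kinks + 1 \<Longrightarrow> moment (knot j) = (if even j then 0 else moment b)"
    using alt(3) by simp
qed

lemma piece_length:
  assumes k: "k \<le> card kinks"
  shows "knot (Suc k) - knot k = (b - a) / (card kinks + 1)"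
proof -
  define len where "len k = knot (Suc k) - knot k" for k
  have len_pos: "0 < len k" if "k \<le> card kinks" for k
    using knot_less[of k "Suc k"] that unfolding len_def by simp
  \<comment> \<open>each moment increment is \<open>\<plusminus>moment b\<close> and also \<open>\<plusminus>e a * len k\<^sup>2 / 6\<close>\<close>
  have len4: "(e a)^2 * (len k)^4 = 36 * (moment b)^2" if "k \<le> card kinks" for k
  proof -
    have "moment (knot (Suc k)) - moment (knot k) = moment b \<or>
        moment (knot (Suc k)) - moment (knot k) = - moment b"
      using moment_knot_alternates(3)[of k] moment_knot_alternates(3)[of "Suc k"] that
      by (cases "even k") simp_all
    then have "(moment b)^2 = (moment (knot (Suc k)) - moment (knot k))^2" by fastforce
    also have "\<dots> = ((-1)^(Suc k) * e a * (len k)^2 / 6)^2"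
      unfolding moment_step(1)[OF that] len_def ..
    also have "\<dots> = (e a)^2 * (len k)^4 / 36"
      by (simp add: power_mult_distrib power_divide flip: power_mult)
    finally show ?thesis by simp
  qed
  have len_eq: "len k = len 0" if "k \<le> card kinks" for k
  proof -
    have "(e a)^2 * (len k)^4 = (e a)^2 * (len 0)^4"
      using len4[OF that] len4[of 0] by simp
    then have "(len k)^4 = (len 0)^4" using residual_a_nonzero by simp
    then show ?thesis
      using len_pos[OF that] len_pos[of 0] by (simp add: power_eq_iff_eq_base)
  qed
  have "b - a = (\<Sum>k\<le>card kinks. len k)"
    unfolding len_def by (rule sum_piece_lengths[symmetric])
  also have "\<dots> = (\<Sum>k\<le>card kinks. len 0)"
    by (rule sum.cong) (auto intro: len_eq)
  finally have "len 0 = (b - a) / (card kinks + 1)" by (simp add: field_simps)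
  then have "len k = (b - a) / (card kinks + 1)" using len_eq[OF k] by simp
  then show ?thesis unfolding len_def .
qed

lemma slope_eq:
  assumes k: "k \<le> card kinks"
  shows "slope k = (-1)^(Suc k) * (2 * (card kinks + 1) * e a / (b - a))"
  using residual_piece(2)[OF k] residual_knot_alternates[of "Suc k"] piece_length[OF k] k a_less_b
  by (simp add: field_simps)

lemma knot_less_midpoint_iff:
  assumes "j \<le> card kinks + 1" "k \<le> card kinks"
  shows "knot j < (knot k + knot (Suc k)) / 2 \<longleftrightarrow> j \<le> k"
proof (cases "j \<le> k")
  case True
  then show ?thesis using knot_le[of j k] knot_less[of k "Suc k"] assms by simp
next
  case False
  then show ?thesis using knot_le[of "Suc k" j] knot_less[of k "Suc k"] assms by simp
qed

lemma midpoint_less_knot_iff: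
  assumes "j \<le> card kinks + 1" "k \<le> card kinks"
  shows "(knot k + knot (Suc k)) / 2 < knot j \<longleftrightarrow> k < j"
proof (cases "k < j")
  case True
  then show ?thesis using knot_le[of "Suc k" j] knot_less[of k "Suc k"] assms by simp
next
  case False
  then show ?thesis using knot_le[of j k] knot_less[of k "Suc k"] assms by simp
qed

lemma active_pattern_increasing:
  assumes i: "i \<in> {1..H}" "v i \<noteq> 0" and w: "0 < w i"
  obtains j where "odd j" "j \<le> card kinks + 1" "\<And>k. k \<le> card kinks \<Longrightarrow> active i k \<longleftrightarrow> j \<le> k"
proof -
  define t where "t = - bias i / w i"
  have shift: "bias i + w i * z = w i * (z - t)" for z unfolding t_def using w by (simp add: field_simps)
  have active_iff: "active i k \<longleftrightarrow> t < (knot k + knot (Suc k)) / 2" for k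
    unfolding active_def shift using w by (simp add: zero_less_mult_iff)
  consider "t \<le> a" | "b \<le> t" | "a < t" "t < b" by linarith
  then show thesis
  proof cases
    case 1
    then show thesis using kink_of_increasing_neuron(2)[OF i w t_def] moment_knot_alternates(2) by simp
  next
    case 2
    have "\<not> active i k" if "k \<le> card kinks" for k
      using active_iff knot_mem[of k] knot_less[of k "Suc k"] knot_mem[of "Suc k"] that 2 by auto
    then show thesis using moment_knot_alternates(1) by (intro that[of "card kinks + 1"]) auto
  next
    case 3
    then have "t \<in> kinks" unfolding kinks_def t_def using i w by auto
    then have "t \<in> knot ` {1..card kinks}" unfolding knot_image .
    then obtain j where j: "j \<in> {1..card kinks}" "knot j = t" by blast
    have "moment t = moment b"
      using kink_of_increasing_neuron(1)[OF i w t_def] 3 by simp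
    then have "odd j" using moment_knot_alternates(2) moment_knot_alternates(3)[of j] j
      by (auto split: if_splits)
    moreover have "active i k \<longleftrightarrow> j \<le> k" if "k \<le> card kinks" for k
      using active_iff[of k] knot_less_midpoint_iff[of j k] j that by auto
    ultimately show thesis using j by (intro that[of j]) auto
  qed
qed

lemma active_pattern_decreasing:
  assumes i: "i \<in> {1..H}" "v i \<noteq> 0" and w: "w i < 0"
  obtains j where "even j" "j \<le> card kinks + 1" "\<And>k. k \<le> card kinks \<Longrightarrow> active i k \<longleftrightarrow> k < j"
proof -
  define t where "t = - bias i / w i"
  have shift: "bias i + w i * z = w i * (z - t)" for z unfolding t_def using w by (simp add: field_simps)
  have active_iff: "active i k \<longleftrightarrow> (knot k + knot (Suc k)) / 2 < t" for k
    unfolding active_def shift using w by (simp add: zero_less_mult_iff)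
  consider "b \<le> t" | "t \<le> a" | "a < t" "t < b" by linarith
  then show thesis
  proof cases
    case 1
    then show thesis using kink_of_decreasing_neuron(2)[OF i w t_def] moment_knot_alternates(2) by simp
  next
    case 2
    have "\<not> active i k" if "k \<le> card kinks" for k
      using active_iff knot_mem[of k] knot_less[of k "Suc k"] knot_mem[of "Suc k"] that 2 by auto
    then show thesis by (intro that[of 0]) auto
  next
    case 3
    then have "t \<in> kinks" unfolding kinks_def t_def using i w by auto
    then have "t \<in> knot ` {1..card kinks}" unfolding knot_image .
    then obtain j where j: "j \<in> {1..card kinks}" "knot j = t" by blast
    have "moment t = 0"
      using kink_of_decreasing_neuron(1)[OF i w t_def] 3 by simp
    then have "even j" using moment_knot_alternates(2) moment_knot_alternates(3)[of j] j
      by (auto split: if_splits)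
    moreover have "active i k \<longleftrightarrow> k < j" if "k \<le> card kinks" for k
      using active_iff[of k] midpoint_less_knot_iff[of j k] j that by auto
    ultimately show thesis using j by (intro that[of j]) auto
  qed
qed

lemma alternating_sum_active:
  assumes i: "i \<in> {1..H}"
  shows "(\<Sum>k\<le>card kinks. (-1)^k * (if active i k then v i * w i else 0)) = 0"
proof (cases "v i = 0 \<or> w i = 0")
  case False
  then have v: "v i \<noteq> 0" and "w i \<noteq> 0" by auto
  have "(\<Sum>k\<le>card kinks. (-1)^k * (if active i k then v i * w i else 0))
      = (\<Sum>k\<le>card kinks. if active i k then v i * w i * (-1)^k else 0)"
    by (rule sum.cong) simp_all
  also have "\<dots> = (\<Sum>k\<in>{k \<in> {..card kinks}. active i k}. v i * w i * (-1)^k)"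
    by (rule sum.inter_filter[symmetric]) simp
  finally have restrict: "(\<Sum>k\<le>card kinks. (-1)^k * (if active i k then v i * w i else 0))
      = v i * w i * (\<Sum>k\<in>{k \<in> {..card kinks}. active i k}. (-1)^k)"
    by (simp add: sum_distrib_left)
  \<comment> \<open>the neuron is active on a block of pieces of even length\<close>
  consider "0 < w i" | "w i < 0" using \<open>w i \<noteq> 0\<close> by linarith
  then show ?thesis
  proof cases
    case 1
    then obtain j where j: "odd j" "j \<le> card kinks + 1"
      and act: "\<And>k. k \<le> card kinks \<Longrightarrow> active i k \<longleftrightarrow> j \<le> k"
      using active_pattern_increasing[OF i v] by blast
    have "{k \<in> {..card kinks}. active i k} = {j..<card kinks + 1}" using act by auto
    moreover have "even (card kinks + 1 - j)" using j moment_knot_alternates(1) by presburger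
    ultimately show ?thesis
      unfolding restrict using sum_neg_one_power_even_length[OF j(2)] by simp
  next
    case 2
    then obtain j where j: "even j" "j \<le> card kinks + 1"
      and act: "\<And>k. k \<le> card kinks \<Longrightarrow> active i k \<longleftrightarrow> k < j"
      using active_pattern_decreasing[OF i v] by blast
    have "{k \<in> {..card kinks}. active i k} = {0..<j}" using act j(2) by auto
    then show ?thesis
      unfolding restrict using j by (simp add: sum_neg_one_power_even_length)
  qed
qed (intro sum.neutral, auto)

lemma alternating_sum_slope: "(\<Sum>k\<le>card kinks. (-1)^k * slope k) = - \<alpha>"
proof -
  have signs: "(\<Sum>k\<le>card kinks. (-1::real)^k) = 1"
    using sum_neg_one_power_even_length[of 0 "card kinks"] moment_knot_alternates(1)
    by (simp add: lessThan_Suc_atMost[symmetric] atLeast0LessThan)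
  have "(\<Sum>k\<le>card kinks. (-1)^k * slope k)
      = (\<Sum>k\<le>card kinks. \<Sum>i=1..H. (-1)^k * (if active i k then v i * w i else 0))
        - (\<Sum>k\<le>card kinks. (-1)^k) * \<alpha>"
    by (simp add: slope_def right_diff_distrib sum_distrib_left sum_distrib_right sum_subtractf)
  also have "(\<Sum>k\<le>card kinks. \<Sum>i=1..H. (-1)^k * (if active i k then v i * w i else 0))
      = (\<Sum>i=1..H. \<Sum>k\<le>card kinks. (-1)^k * (if active i k then v i * w i else 0))"
    by (rule sum.swap)
  also have "\<dots> = 0" by (simp add: alternating_sum_active)
  finally show ?thesis using signs by simp
qed

lemma residual_a_eq: "e a = \<alpha> * (b - a) / (2 * (card kinks + 1)^2)"
proof -
  define n where "n = real (card kinks) + 1"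
  have "(\<Sum>k\<le>card kinks. (-1)^k * slope k) = (\<Sum>k\<le>card kinks. - (2 * n * e a / (b - a)))"
    by (rule sum.cong) (simp_all add: slope_eq n_def)
  then have "\<alpha> = n * (2 * n * e a / (b - a))"
    unfolding alternating_sum_slope by (simp add: n_def)
  moreover have "0 < n" unfolding n_def by simp
  ultimately have "e a = \<alpha> * (b - a) / (2 * n^2)" using a_less_b by (simp add: field_simps power2_eq_square)
  then show ?thesis by (simp add: n_def)
qed

lemma integral_residual_sq_eq:
  "integral {a..b} (\<lambda>y. (e y)^2) = \<alpha>^2 * (b - a)^3 / (12 * (card kinks + 1)^4)"
  unfolding integral_residual_sq residual_a_eq
  using a_less_b by (simp add: field_simps eval_nat_numeral)

theorem integral_residual_sq_ge:
  "\<alpha>^2 * (b - a)^3 / (12 * (2 * real_of_int \<lfloor>real H / 2\<rfloor> + 1)^4) \<le> integral {a..b} (\<lambda>y. (e y)^2)"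
proof -
  obtain r where r: "card kinks = 2 * r" using moment_knot_alternates(1) by blast
  then have "int r \<le> \<lfloor>real H / 2\<rfloor>" using card_kinks_le by (simp add: le_floor_iff)
  then have "real (card kinks) + 1 \<le> 2 * real_of_int \<lfloor>real H / 2\<rfloor> + 1" using r by simp
  then have "(real (card kinks) + 1)^4 \<le> (2 * real_of_int \<lfloor>real H / 2\<rfloor> + 1)^4"
    by (rule power_mono) simp
  then show ?thesis unfolding integral_residual_sq_eq using a_less_b
    by (intro divide_left_mono mult_left_mono) (auto intro!: mult_pos_pos)
qed

end

section \<open>The limiting gradient of the smoothed risk\<close>

lemma integral_scaled_lebesgue_interval:
  fixes M :: "real measure" and g :: "real \<Rightarrow> real"
  assumes M_sets: "sets M = sets (restrict_space lborel {a..b})"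
    and M_meas: "\<forall>E\<in>sets M. emeasure M E = ennreal \<rho> * emeasure lborel E"
    and rho: "0 \<le> \<rho>" and g: "continuous_on {a..b} g"
  shows "(\<integral>y. g y \<partial>M) = \<rho> * integral {a..b} g"
proof -
  define N where "N = restrict_space lborel {a..b}"
  have ab_sets: "{a..b} \<inter> space lborel \<in> sets lborel" by simp
  have M_density: "M = density N (\<lambda>_. ennreal \<rho>)"
  proof (rule measure_eqI)
    show "sets M = sets (density N (\<lambda>_. ennreal \<rho>))" using M_sets unfolding N_def by simp
    fix A assume A: "A \<in> sets M"
    then have AN: "A \<in> sets N" using M_sets unfolding N_def by simp
    then have "A \<subseteq> {a..b}" unfolding N_def using sets.sets_into_space by fastforce
    then have "emeasure N A = emeasure lborel A"
      unfolding N_def by (rule emeasure_restrict_space[OF ab_sets])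
    then show "emeasure M A = emeasure (density N (\<lambda>_. ennreal \<rho>)) A"
      using M_meas A emeasure_density_const[OF AN] by simp
  qed
  have "g \<in> borel_measurable (restrict_space borel {a..b})"
    by (rule borel_measurable_continuous_on_restrict[OF g])
  then have g_meas: "g \<in> borel_measurable N"
    unfolding N_def by (simp add: measurable_cong_sets sets_restrict_space)
  have "(\<integral>y. g y \<partial>M) = (\<integral>y. \<rho> * g y \<partial>N)"
    unfolding M_density by (subst integral_density) (use g_meas rho in auto)
  also have "\<dots> = (\<integral>y. indicator {a..b} y *\<^sub>R (\<rho> * g y) \<partial>lborel)"
    unfolding N_def by (rule integral_restrict_space[OF ab_sets])
  also have "\<dots> = integral {a..b} (\<lambda>y. \<rho> * g y)"
  proof -
    have "continuous_on {a..b} (\<lambda>y. \<rho> * g y)" using g by (intro continuous_intros)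
    from set_borel_integral_eq_integral(2)[OF borel_integrable_atLeastAtMost'[OF this]]
    show ?thesis
      unfolding set_lebesgue_integral_def by simp
  qed
  finally show ?thesis by simp
qed

definition net_residual :: "(real \<Rightarrow> real) \<Rightarrow> nat \<Rightarrow> real \<Rightarrow> real \<Rightarrow> (nat \<Rightarrow> real) \<Rightarrow> real \<Rightarrow> real" where
  "net_residual \<sigma> H \<alpha> \<beta> \<theta> y =
     \<alpha> * y + \<beta> - \<theta> (3*H+1) - (\<Sum>i=1..H. \<theta> (2*H+i) * \<sigma> (\<theta> (H+i) + \<theta> i * y))"

definition net_residual_deriv ::
    "(real \<Rightarrow> real) \<Rightarrow> (real \<Rightarrow> real) \<Rightarrow> nat \<Rightarrow> (nat \<Rightarrow> real) \<Rightarrow> (nat \<Rightarrow> real) \<Rightarrow> real \<Rightarrow> real" where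
  "net_residual_deriv \<sigma> \<sigma>' H \<theta> d y =
     - (d (3*H+1) + (\<Sum>i=1..H. d (2*H+i) * \<sigma> (\<theta> (H+i) + \<theta> i * y)
          + \<theta> (2*H+i) * \<sigma>' (\<theta> (H+i) + \<theta> i * y) * (d (H+i) + d i * y)))"

lemma net_residual_relu: "net_residual (\<lambda>z. max z 0) H \<alpha> \<beta> \<theta> y = \<alpha> * y + \<beta> - relu_net1 H \<theta> y"
  by (simp add: net_residual_def relu_net1_def)

lemma has_field_derivative_net_residual:
  assumes \<sigma>: "\<And>z. (\<sigma> has_field_derivative \<sigma>' z) (at z)"
    and \<phi>: "\<And>p. ((\<lambda>t. \<phi> t p) has_field_derivative d p) (at t within S)"
  shows "((\<lambda>t. net_residual \<sigma> H \<alpha> \<beta> (\<phi> t) y) has_field_derivative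
           net_residual_deriv \<sigma> \<sigma>' H (\<phi> t) d y) (at t within S)"
proof -
  have neuron: "((\<lambda>t. \<phi> t (2*H+i) * \<sigma> (\<phi> t (H+i) + \<phi> t i * y)) has_field_derivative
      d (2*H+i) * \<sigma> (\<phi> t (H+i) + \<phi> t i * y)
      + \<phi> t (2*H+i) * \<sigma>' (\<phi> t (H+i) + \<phi> t i * y) * (d (H+i) + d i * y)) (at t within S)" for i
    by (rule DERIV_cong[OF DERIV_mult'[OF \<phi> DERIV_chain2[OF \<sigma>]]])
      (auto intro!: derivative_eq_intros \<phi> simp: algebra_simps)
  show ?thesis unfolding net_residual_def net_residual_deriv_def
    by (rule DERIV_cong[OF DERIV_diff[OF DERIV_diff[OF DERIV_const \<phi>] DERIV_sum[OF neuron]]]) simp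
qed

lemma net_residual_deriv_outer_bias:
  "net_residual_deriv \<sigma> \<sigma>' H \<theta> (\<lambda>p. if p = 3*H+1 then 1 else 0) y = -1"
  unfolding net_residual_deriv_def by (simp add: sum.neutral)

lemma net_residual_deriv_inner_bias:
  assumes "j \<in> {1..H}"
  shows "net_residual_deriv \<sigma> \<sigma>' H \<theta> (\<lambda>p. if p = H+j then 1 else 0) y
    = - \<theta> (2*H+j) * \<sigma>' (\<theta> (H+j) + \<theta> j * y)"
proof -
  have "(\<Sum>i=1..H. (if 2*H+i = H+j then 1 else 0) * \<sigma> (\<theta> (H+i) + \<theta> i * y)
      + \<theta> (2*H+i) * \<sigma>' (\<theta> (H+i) + \<theta> i * y) * ((if H+i = H+j then 1 else 0) + (if i = H+j then 1 else 0) * y))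
      = (\<Sum>i=1..H. if i = j then \<theta> (2*H+i) * \<sigma>' (\<theta> (H+i) + \<theta> i * y) else 0)"
    by (rule sum.cong) (use assms in auto)
  then show ?thesis unfolding net_residual_deriv_def using assms by simp
qed

lemma net_residual_deriv_inner_weight:
  assumes "j \<in> {1..H}"
  shows "net_residual_deriv \<sigma> \<sigma>' H \<theta> (\<lambda>p. if p = j then 1 else 0) y
    = - \<theta> (2*H+j) * \<sigma>' (\<theta> (H+j) + \<theta> j * y) * y"
proof -
  have "(\<Sum>i=1..H. (if 2*H+i = j then 1 else 0) * \<sigma> (\<theta> (H+i) + \<theta> i * y)
      + \<theta> (2*H+i) * \<sigma>' (\<theta> (H+i) + \<theta> i * y) * ((if H+i = j then 1 else 0) + (if i = j then 1 else 0) * y))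
      = (\<Sum>i=1..H. if i = j then \<theta> (2*H+i) * \<sigma>' (\<theta> (H+i) + \<theta> i * y) * y else 0)"
    by (rule sum.cong) (use assms in auto)
  then show ?thesis unfolding net_residual_deriv_def using assms by simp
qed

lemma continuous_on_compose_UNIV:
  "continuous_on UNIV g \<Longrightarrow> continuous_on S h \<Longrightarrow> continuous_on S (\<lambda>x. g (h x))"
  by (rule continuous_on_compose2) auto

lemma risk1_approx_grad_eq:
  fixes M :: "real measure" and f \<sigma> \<sigma>' :: "real \<Rightarrow> real"
  assumes M_sets: "sets M = sets (restrict_space lborel {a..b})"
    and M_meas: "\<forall>E\<in>sets M. emeasure M E = ennreal \<rho> * emeasure lborel E"
    and rho: "0 \<le> \<rho>" and f_affine: "\<forall>x\<in>{a..b}. f x = \<alpha> * x + \<beta>"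
    and \<sigma>: "\<And>z. (\<sigma> has_field_derivative \<sigma>' z) (at z)"
    and cont: "continuous_on UNIV \<sigma>" "continuous_on UNIV \<sigma>'"
  shows "risk1_approx_grad M f H \<sigma> \<theta> k = \<rho> * integral {a..b}
           (\<lambda>y. 2 * net_residual \<sigma> H \<alpha> \<beta> \<theta> y * net_residual_deriv \<sigma> \<sigma>' H \<theta> (\<lambda>p. if p = k then 1 else 0) y)"
proof -
  define \<delta> where "\<delta> p = (if p = k then 1 else 0 :: real)" for p
  define F where "F t y = (net_residual \<sigma> H \<alpha> \<beta> (\<theta>(k := t)) y)^2" for t y
  define F' where "F' t y = 2 * net_residual \<sigma> H \<alpha> \<beta> (\<theta>(k := t)) y * net_residual_deriv \<sigma> \<sigma>' H (\<theta>(k := t)) \<delta> y"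
    for t y
  have continuous_residual: "continuous_on S (net_residual \<sigma> H \<alpha> \<beta> \<theta>')" for S \<theta>'
    unfolding net_residual_def by (intro continuous_intros continuous_on_compose_UNIV[OF cont(1)])
  have risk_eq: "risk1_approx M f H \<sigma> \<theta>' = \<rho> * integral {a..b} (\<lambda>y. (net_residual \<sigma> H \<alpha> \<beta> \<theta>' y)^2)" for \<theta>'
  proof -
    have "space M = {a..b}" using sets_eq_imp_space_eq[OF M_sets] by simp
    then have "risk1_approx M f H \<sigma> \<theta>' = (\<integral>y. (net_residual \<sigma> H \<alpha> \<beta> \<theta>' y)^2 \<partial>M)"
      unfolding risk1_approx_def
      by (intro Bochner_Integration.integral_cong) (auto simp: f_affine net_residual_def)
    also have "\<dots> = \<rho> * integral {a..b} (\<lambda>y. (net_residual \<sigma> H \<alpha> \<beta> \<theta>' y)^2)"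
      by (rule integral_scaled_lebesgue_interval[OF M_sets M_meas rho])
        (intro continuous_intros continuous_residual)
    finally show ?thesis .
  qed
  have upd: "((\<lambda>t. (\<theta>(k := t)) p) has_field_derivative \<delta> p) (at t within UNIV)" for p t
    by (cases "p = k") (auto simp: \<delta>_def)
  have "((\<lambda>t. F t y) has_field_derivative F' t y) (at t within UNIV)" for t y
    unfolding F_def F'_def power2_eq_square
    by (rule DERIV_cong[OF DERIV_mult'[OF has_field_derivative_net_residual[OF \<sigma> upd]
          has_field_derivative_net_residual[OF \<sigma> upd]]]) (simp add: fun_upd_def)
  moreover have "F t integrable_on cbox a b" for t
    unfolding F_def cbox_interval
    by (intro integrable_continuous_real continuous_intros continuous_residual)
  moreover have "continuous_on (UNIV \<times> cbox a b) (\<lambda>(t, y). F' t y)"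
  proof -
    have "continuous_on UNIV (\<lambda>z::real \<times> real. (\<theta>(k := fst z)) p)" for p
      by (cases "p = k") (auto intro: continuous_intros)
    then have "continuous_on UNIV (\<lambda>z::real \<times> real. F' (fst z) (snd z))"
      unfolding F'_def net_residual_def net_residual_deriv_def
      by (intro continuous_intros continuous_on_compose_UNIV[OF cont(1)]
          continuous_on_compose_UNIV[OF cont(2)])
    then show ?thesis unfolding case_prod_beta' by (rule continuous_on_subset) simp
  qed
  ultimately have "((\<lambda>t. integral (cbox a b) (F t)) has_field_derivative integral (cbox a b) (F' (\<theta> k)))
      (at (\<theta> k) within UNIV)"
    by (intro leibniz_rule_field_derivative) auto
  then have "((\<lambda>t. risk1_approx M f H \<sigma> (\<theta>(k := t))) has_field_derivative \<rho> * integral {a..b} (F' (\<theta> k)))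
      (at (\<theta> k))"
    unfolding risk_eq F_def cbox_interval by (rule DERIV_cmult)
  then show ?thesis
    unfolding risk1_approx_grad_def F'_def \<delta>_def by (simp add: DERIV_imp_deriv)
qed

lemma abs_net_residual_le:
  assumes "\<And>i. i \<in> {1..H} \<Longrightarrow> \<bar>\<sigma> (\<theta> (H+i) + \<theta> i * y)\<bar> \<le> D"
  shows "\<bar>net_residual \<sigma> H \<alpha> \<beta> \<theta> y\<bar> \<le> \<bar>\<alpha> * y + \<beta> - \<theta> (3*H+1)\<bar> + (\<Sum>i=1..H. \<bar>\<theta> (2*H+i)\<bar> * D)"
proof -
  have "\<bar>\<Sum>i=1..H. \<theta> (2*H+i) * \<sigma> (\<theta> (H+i) + \<theta> i * y)\<bar> \<le> (\<Sum>i=1..H. \<bar>\<theta> (2*H+i)\<bar> * D)"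
    by (rule order_trans[OF sum_abs sum_mono]) (auto simp: abs_mult intro!: mult_left_mono assms)
  then show ?thesis unfolding net_residual_def by linarith
qed

lemma abs_net_residual_deriv_le:
  assumes "\<And>i. i \<in> {1..H} \<Longrightarrow> \<bar>\<sigma> (\<theta> (H+i) + \<theta> i * y)\<bar> \<le> D"
    and "\<And>i. i \<in> {1..H} \<Longrightarrow> \<bar>\<sigma>' (\<theta> (H+i) + \<theta> i * y)\<bar> \<le> D"
  shows "\<bar>net_residual_deriv \<sigma> \<sigma>' H \<theta> d y\<bar>
    \<le> \<bar>d (3*H+1)\<bar> + (\<Sum>i=1..H. \<bar>d (2*H+i)\<bar> * D + \<bar>\<theta> (2*H+i)\<bar> * D * \<bar>d (H+i) + d i * y\<bar>)"
proof -
  have "\<bar>d (2*H+i) * \<sigma> (\<theta> (H+i) + \<theta> i * y) + \<theta> (2*H+i) * \<sigma>' (\<theta> (H+i) + \<theta> i * y) * (d (H+i) + d i * y)\<bar>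
      \<le> \<bar>d (2*H+i)\<bar> * D + \<bar>\<theta> (2*H+i)\<bar> * D * \<bar>d (H+i) + d i * y\<bar>" if i: "i \<in> {1..H}" for i
  proof -
    have "\<bar>d (2*H+i) * \<sigma> (\<theta> (H+i) + \<theta> i * y)\<bar> \<le> \<bar>d (2*H+i)\<bar> * D"
      unfolding abs_mult by (rule mult_left_mono[OF assms(1)[OF i]]) simp
    moreover have "\<bar>\<theta> (2*H+i) * \<sigma>' (\<theta> (H+i) + \<theta> i * y) * (d (H+i) + d i * y)\<bar>
        \<le> \<bar>\<theta> (2*H+i)\<bar> * D * \<bar>d (H+i) + d i * y\<bar>"
      unfolding abs_mult by (intro mult_right_mono mult_left_mono assms(2)[OF i]) simp_all
    ultimately show ?thesis by linarith
  qed
  then have "\<bar>\<Sum>i=1..H. d (2*H+i) * \<sigma> (\<theta> (H+i) + \<theta> i * y)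
      + \<theta> (2*H+i) * \<sigma>' (\<theta> (H+i) + \<theta> i * y) * (d (H+i) + d i * y)\<bar>
      \<le> (\<Sum>i=1..H. \<bar>d (2*H+i)\<bar> * D + \<bar>\<theta> (2*H+i)\<bar> * D * \<bar>d (H+i) + d i * y\<bar>)"
    by (intro order_trans[OF sum_abs sum_mono])
  then show ?thesis unfolding net_residual_deriv_def by linarith
qed

lemma C1_differentiable_on_UNIV_deriv:
  fixes R :: "real \<Rightarrow> real"
  assumes "R C1_differentiable_on UNIV"
  shows "(R has_field_derivative deriv R z) (at z)" "continuous_on UNIV R" "continuous_on UNIV (deriv R)"
proof -
  have diff: "\<And>x. R differentiable at x" and cont: "continuous_on UNIV (\<lambda>x. vector_derivative R (at x))"
    using assms unfolding C1_differentiable_on_eq by auto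
  have deriv: "(R has_field_derivative deriv R x) (at x)" for x
    using diff DERIV_deriv_iff_real_differentiable by blast
  then show "(R has_field_derivative deriv R z) (at z)" .
  show "continuous_on UNIV R" using deriv by (meson DERIV_continuous_on has_field_derivative_at_within)
  have "vector_derivative R (at x) = deriv R x" for x
    by (rule vector_derivative_at[OF deriv[unfolded has_real_derivative_iff_has_vector_derivative]])
  then show "continuous_on UNIV (deriv R)" using cont by simp
qed

lemma uniformly_bounded_by_derivative:
  fixes R R' :: "nat \<Rightarrow> real \<Rightarrow> real"
  assumes deriv: "\<And>r z. (R r has_field_derivative R' r z) (at z)"
    and bounded0: "Bseq (\<lambda>r. R r 0)"
    and deriv_bound: "\<And>r z. \<bar>z\<bar> \<le> Z \<Longrightarrow> \<bar>R' r z\<bar> \<le> C"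
  obtains B where "\<And>r z. \<bar>z\<bar> \<le> Z \<Longrightarrow> \<bar>R r z\<bar> \<le> B"
proof -
  obtain K where K: "\<And>r. \<bar>R r 0\<bar> \<le> K" using bounded0 by (metis BseqE real_norm_def)
  have "\<bar>R r z\<bar> \<le> K + \<bar>C\<bar> * \<bar>Z\<bar>" if z: "\<bar>z\<bar> \<le> Z" for r z
  proof -
    have "norm (R r z - R r 0) \<le> C * norm (z - 0)"
    proof (rule field_differentiable_bound[of "{-Z..Z}" "R r" "R' r" C z 0])
      fix x assume "x \<in> {-Z..Z}"
      then show "(R r has_field_derivative R' r x) (at x within {-Z..Z})" "norm (R' r x) \<le> C"
        using has_field_derivative_at_within[OF deriv] deriv_bound[of x r] by auto
    qed (use z in auto)
    moreover have "C * \<bar>z\<bar> \<le> \<bar>C\<bar> * \<bar>Z\<bar>" using z by (intro mult_mono) auto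
    ultimately have "\<bar>R r z - R r 0\<bar> \<le> \<bar>C\<bar> * \<bar>Z\<bar>" by simp
    then show ?thesis using K[of r] by linarith
  qed
  then show thesis by (rule that)
qed

lemma risk1_approx_grad_tendsto:
  fixes M :: "real measure" and f :: "real \<Rightarrow> real" and R :: "nat \<Rightarrow> real \<Rightarrow> real"
  assumes f_affine: "\<forall>x\<in>{a..b}. f x = \<alpha> * x + \<beta>"
    and rho: "0 \<le> \<rho>"
    and M_sets: "sets M = sets (restrict_space lborel {a..b})"
    and M_meas: "\<forall>E\<in>sets M. emeasure M E = ennreal \<rho> * emeasure lborel E"
    and R_C1: "\<forall>r. R r C1_differentiable_on UNIV"
    and R_lim: "\<forall>x. (\<lambda>r. \<bar>R r x - max x 0\<bar> + \<bar>deriv (R r) x - indicator {0<..} x\<bar>) \<longlonglongrightarrow> 0"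
    and R_bdd: "\<forall>x. \<exists>C. \<forall>r. \<forall>y\<in>{-\<bar>x\<bar>..\<bar>x\<bar>}. \<bar>deriv (R r) y\<bar> \<le> C"
  shows "(\<lambda>r. risk1_approx_grad M f H (R r) \<theta> k) \<longlonglongrightarrow> \<rho> * integral {a..b}
           (\<lambda>y. 2 * net_residual (\<lambda>z. max z 0) H \<alpha> \<beta> \<theta> y
              * net_residual_deriv (\<lambda>z. max z 0) (indicator {0<..}) H \<theta> (\<lambda>p. if p = k then 1 else 0) y)"
proof -
  define \<delta> where "\<delta> p = (if p = k then 1 else 0 :: real)" for p
  define F where "F r y = 2 * net_residual (R r) H \<alpha> \<beta> \<theta> y * net_residual_deriv (R r) (deriv (R r)) H \<theta> \<delta> y"
    for r y
  note R = C1_differentiable_on_UNIV_deriv[OF R_C1[rule_format]]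
  have lim_R: "(\<lambda>r. R r z) \<longlonglongrightarrow> max z 0" and lim_R': "(\<lambda>r. deriv (R r) z) \<longlonglongrightarrow> indicator {0<..} z" for z
    using Lim_null_comparison[OF _ R_lim[rule_format, of z], of "\<lambda>r. R r z - max z 0"]
      Lim_null_comparison[OF _ R_lim[rule_format, of z], of "\<lambda>r. deriv (R r) z - indicator {0<..} z"]
    by (auto simp: LIM_zero_iff)
  \<comment> \<open>dominated convergence: on \<open>[-Z, Z]\<close>, which contains all pre-activations, \<open>R r\<close> and its
    derivative are bounded uniformly in \<open>r\<close>\<close>
  define Z where "Z = (\<Sum>i=1..H. \<bar>\<theta> (H+i)\<bar> + \<bar>\<theta> i\<bar> * (\<bar>a\<bar> + \<bar>b\<bar>))"
  have arg_bound: "\<bar>\<theta> (H+i) + \<theta> i * y\<bar> \<le> Z" if i: "i \<in> {1..H}" and y: "y \<in> {a..b}" for i y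
  proof -
    have "\<bar>\<theta> i * y\<bar> \<le> \<bar>\<theta> i\<bar> * (\<bar>a\<bar> + \<bar>b\<bar>)"
      unfolding abs_mult using y by (intro mult_left_mono) auto
    then have "\<bar>\<theta> (H+i) + \<theta> i * y\<bar> \<le> \<bar>\<theta> (H+i)\<bar> + \<bar>\<theta> i\<bar> * (\<bar>a\<bar> + \<bar>b\<bar>)" by linarith
    also have "\<dots> \<le> Z" unfolding Z_def using i by (intro member_le_sum) auto
    finally show ?thesis .
  qed
  obtain C where C_Z: "\<forall>r. \<forall>z\<in>{-\<bar>Z\<bar>..\<bar>Z\<bar>}. \<bar>deriv (R r) z\<bar> \<le> C" using R_bdd by blast
  have C: "\<bar>deriv (R r) z\<bar> \<le> C" if "\<bar>z\<bar> \<le> Z" for r z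
  proof -
    have "z \<in> {-\<bar>Z\<bar>..\<bar>Z\<bar>}" using that by auto
    then show ?thesis using C_Z by blast
  qed
  obtain B where B: "\<And>r z. \<bar>z\<bar> \<le> Z \<Longrightarrow> \<bar>R r z\<bar> \<le> B"
    using uniformly_bounded_by_derivative[OF R(1) convergent_imp_Bseq[OF convergentI[OF lim_R]] C] by blast
  define D where "D = max B C"
  define h where "h y = 2 * (\<bar>\<alpha> * y + \<beta> - \<theta> (3*H+1)\<bar> + (\<Sum>i=1..H. \<bar>\<theta> (2*H+i)\<bar> * D))
    * (\<bar>\<delta> (3*H+1)\<bar> + (\<Sum>i=1..H. \<bar>\<delta> (2*H+i)\<bar> * D + \<bar>\<theta> (2*H+i)\<bar> * D * \<bar>\<delta> (H+i) + \<delta> i * y\<bar>))" for y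
  have "norm (F r y) \<le> h y" if y: "y \<in> {a..b}" for r y
  proof -
    have bounded: "\<bar>R r z\<bar> \<le> D \<and> \<bar>deriv (R r) z\<bar> \<le> D" if "\<bar>z\<bar> \<le> Z" for z
      using B[OF that, of r] C[OF that, of r] unfolding D_def by (simp add: le_max_iff_disj)
    have "\<bar>R r (\<theta> (H+i) + \<theta> i * y)\<bar> \<le> D" "\<bar>deriv (R r) (\<theta> (H+i) + \<theta> i * y)\<bar> \<le> D"
      if "i \<in> {1..H}" for i
      using bounded[OF arg_bound[OF that y]] by simp_all
    moreover have "0 \<le> D"
      using bounded[of 0] unfolding Z_def by (simp add: sum_nonneg) linarith
    then have "0 \<le> (\<Sum>i=1..H. \<bar>\<theta> (2*H+i)\<bar> * D)" by (simp add: sum_nonneg)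
    ultimately show ?thesis unfolding F_def h_def real_norm_def abs_mult
      by (intro mult_mono abs_net_residual_le abs_net_residual_deriv_le) auto
  qed
  moreover have "F r integrable_on {a..b}" for r
    unfolding F_def net_residual_def net_residual_deriv_def
    by (intro integrable_continuous_real continuous_intros continuous_on_compose_UNIV[OF R(2)]
        continuous_on_compose_UNIV[OF R(3)])
  moreover have "h integrable_on {a..b}"
    unfolding h_def by (intro integrable_continuous_real continuous_intros)
  moreover have "(\<lambda>r. F r y) \<longlonglongrightarrow> 2 * net_residual (\<lambda>z. max z 0) H \<alpha> \<beta> \<theta> y
      * net_residual_deriv (\<lambda>z. max z 0) (indicator {0<..}) H \<theta> \<delta> y" for y
    unfolding F_def net_residual_def net_residual_deriv_def by (intro tendsto_intros lim_R lim_R')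
  ultimately have "(\<lambda>r. integral {a..b} (F r)) \<longlonglongrightarrow> integral {a..b} (\<lambda>y. 2 * net_residual (\<lambda>z. max z 0) H \<alpha> \<beta> \<theta> y
      * net_residual_deriv (\<lambda>z. max z 0) (indicator {0<..}) H \<theta> \<delta> y)"
    by (intro dominated_convergence(2)) auto
  moreover have "risk1_approx_grad M f H (R r) \<theta> k = \<rho> * integral {a..b} (F r)" for r
    unfolding F_def \<delta>_def using R(1) by (intro risk1_approx_grad_eq[OF M_sets M_meas rho f_affine _ R(2,3)])
  ultimately show ?thesis unfolding \<delta>_def by (simp add: tendsto_mult_left)
qed

lemma risk1_eq_integral:
  fixes M :: "real measure" and f :: "real \<Rightarrow> real"
  assumes M_sets: "sets M = sets (restrict_space lborel {a..b})"
    and M_meas: "\<forall>E\<in>sets M. emeasure M E = ennreal \<rho> * emeasure lborel E"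
    and rho: "0 \<le> \<rho>" and f_affine: "\<forall>x\<in>{a..b}. f x = \<alpha> * x + \<beta>"
  shows "risk1 M f H \<theta> = \<rho> * integral {a..b} (\<lambda>y. (relu_net1 H \<theta> y - (\<alpha> * y + \<beta>))^2)"
proof -
  have "space M = {a..b}" using sets_eq_imp_space_eq[OF M_sets] by simp
  then have "risk1 M f H \<theta> = (\<integral>y. (relu_net1 H \<theta> y - (\<alpha> * y + \<beta>))^2 \<partial>M)"
    unfolding risk1_def
    by (intro Bochner_Integration.integral_cong) (auto simp: f_affine power2_commute)
  also have "\<dots> = \<rho> * integral {a..b} (\<lambda>y. (relu_net1 H \<theta> y - (\<alpha> * y + \<beta>))^2)"
    by (rule integral_scaled_lebesgue_interval[OF M_sets M_meas rho])
      (simp add: relu_net1_def continuous_intros)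
  finally show ?thesis .
qed

lemma affine_eq_relu_net1:
  assumes "1 \<le> H"
  shows "\<exists>\<psi>. \<forall>y\<ge>a. relu_net1 H \<psi> y = \<alpha> * y + \<beta>"
proof
  define \<psi> :: "nat \<Rightarrow> real" where "\<psi> p = (if p = 1 then 1 else if p = H+1 then - a
    else if p = 2*H+1 then \<alpha> else if p = 3*H+1 then \<alpha> * a + \<beta> else 0)" for p
  show "\<forall>y\<ge>a. relu_net1 H \<psi> y = \<alpha> * y + \<beta>"
  proof (intro allI impI)
    fix y assume "a \<le> y"
    have "(\<Sum>i=1..H. \<psi> (2*H+i) * max (\<psi> (H+i) + \<psi> i * y) 0)
        = (\<Sum>i=1..H. if i = 1 then \<alpha> * (y - a) else 0)"
      by (rule sum.cong) (use assms \<open>a \<le> y\<close> in \<open>auto simp: \<psi>_def\<close>)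
    then show "relu_net1 H \<psi> y = \<alpha> * y + \<beta>"
      unfolding relu_net1_def using assms by (simp add: \<psi>_def algebra_simps)
  qed
qed

lemma relu_critical_point_if_gradient_zero:
  fixes M :: "real measure" and f :: "real \<Rightarrow> real" and R :: "nat \<Rightarrow> real \<Rightarrow> real"
    and G :: "(nat \<Rightarrow> real) \<Rightarrow> nat \<Rightarrow> real"
  assumes ab: "a < b"
    and f_affine: "\<forall>x\<in>{a..b}. f x = \<alpha> * x + \<beta>"
    and rho: "0 < \<rho>"
    and M_sets: "sets M = sets (restrict_space lborel {a..b})"
    and M_meas: "\<forall>E\<in>sets M. emeasure M E = ennreal \<rho> * emeasure lborel E"
    and R_C1: "\<forall>r. R r C1_differentiable_on UNIV"
    and R_lim: "\<forall>x. (\<lambda>r. \<bar>R r x - max x 0\<bar> + \<bar>deriv (R r) x - indicator {0<..} x\<bar>) \<longlonglongrightarrow> 0"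
    and R_bdd: "\<forall>x. \<exists>C. \<forall>r. \<forall>y\<in>{-\<bar>x\<bar>..\<bar>x\<bar>}. \<bar>deriv (R r) y\<bar> \<le> C"
    and G_def: "\<forall>\<theta>. (\<forall>k\<in>{1..3*H+1}. convergent (\<lambda>r. risk1_approx_grad M f H (R r) \<theta> k))
                  \<longrightarrow> (\<forall>k\<in>{1..3*H+1}. (\<lambda>r. risk1_approx_grad M f H (R r) \<theta> k) \<longlonglongrightarrow> G \<theta> k)"
    and G_zero: "\<forall>k\<in>{1..3*H+1}. G \<theta> k = 0"
    and risk_pos: "0 < risk1 M f H \<theta>"
  shows "relu_critical_point a b \<alpha> \<beta> (\<theta> (3*H+1)) H (\<lambda>i. \<theta> i) (\<lambda>i. \<theta> (H+i)) (\<lambda>i. \<theta> (2*H+i))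
           (\<lambda>y. relu_net1 H \<theta> y - (\<alpha> * y + \<beta>))"
proof -
  define e where "e y = relu_net1 H \<theta> y - (\<alpha> * y + \<beta>)" for y
  define I where "I k = integral {a..b} (\<lambda>y. 2 * net_residual (\<lambda>z. max z 0) H \<alpha> \<beta> \<theta> y
    * net_residual_deriv (\<lambda>z. max z 0) (indicator {0<..}) H \<theta> (\<lambda>p. if p = k then 1 else 0) y)" for k
  have lim: "(\<lambda>r. risk1_approx_grad M f H (R r) \<theta> k) \<longlonglongrightarrow> \<rho> * I k" for k
    unfolding I_def using rho
    by (intro risk1_approx_grad_tendsto[OF f_affine _ M_sets M_meas R_C1 R_lim R_bdd]) simp
  have I_zero: "I k = 0" if "k \<in> {1..3*H+1}" for k
  proof -
    have "G \<theta> k = \<rho> * I k"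
      using G_def lim that by (meson LIMSEQ_unique convergentI)
    then show ?thesis using G_zero that rho by simp
  qed
  have residual: "net_residual (\<lambda>z. max z 0) H \<alpha> \<beta> \<theta> y = - e y" for y
    by (simp add: net_residual_relu e_def)
  have e_eq: "(\<lambda>y. relu_net1 H \<theta> y - (\<alpha> * y + \<beta>)) = e" by (simp add: e_def fun_eq_iff)
  show ?thesis unfolding e_eq
  proof
    show "e y = \<theta> (3*H+1) + (\<Sum>i=1..H. \<theta> (2*H+i) * max (\<theta> (H+i) + \<theta> i * y) 0) - (\<alpha> * y + \<beta>)" for y
      by (simp add: e_def relu_net1_def)
    show "integral {a..b} e = 0"
      using I_zero[of "3*H+1"] unfolding I_def residual net_residual_deriv_outer_bias by simp
    fix i assume i: "i \<in> {1..H}" and v: "\<theta> (2*H+i) \<noteq> 0"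
    have "I (H+i) = integral {a..b} (\<lambda>y. 2 * \<theta> (2*H+i) * (e y * indicator {0<..} (\<theta> (H+i) + \<theta> i * y)))"
      unfolding I_def residual net_residual_deriv_inner_bias[OF i] by (simp add: algebra_simps)
    then show "integral {a..b} (\<lambda>y. e y * indicator {0<..} (\<theta> (H+i) + \<theta> i * y)) = 0"
      using I_zero[of "H+i"] i v by simp
    have "I i = integral {a..b} (\<lambda>y. 2 * \<theta> (2*H+i) * (e y * y * indicator {0<..} (\<theta> (H+i) + \<theta> i * y)))"
      unfolding I_def residual net_residual_deriv_inner_weight[OF i] by (simp add: algebra_simps)
    then show "integral {a..b} (\<lambda>y. e y * y * indicator {0<..} (\<theta> (H+i) + \<theta> i * y)) = 0"
      using I_zero[of i] i v by simp
  next
    show "0 < integral {a..b} (\<lambda>y. (e y)^2)"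
      using risk_pos rho risk1_eq_integral[OF M_sets M_meas _ f_affine, of H \<theta>]
      by (simp add: e_def zero_less_mult_iff)
  qed (rule ab)
qed

lemma risk1_attains_zero_infimum:
  fixes M :: "real measure" and f :: "real \<Rightarrow> real"
  assumes H: "1 \<le> H"
    and M_sets: "sets M = sets (restrict_space lborel {a..b})"
    and M_meas: "\<forall>E\<in>sets M. emeasure M E = ennreal \<rho> * emeasure lborel E"
    and rho: "0 \<le> \<rho>" and f_affine: "\<forall>x\<in>{a..b}. f x = \<alpha> * x + \<beta>"
  shows "\<exists>\<psi>. risk1 M f H \<psi> = (INF \<theta>. risk1 M f H \<theta>) \<and> (INF \<theta>. risk1 M f H \<theta>) = 0"
proof -
  have risk_nonneg: "0 \<le> risk1 M f H \<theta>" for \<theta>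
    unfolding risk1_def by simp
  obtain \<psi> where \<psi>: "\<forall>y\<ge>a. relu_net1 H \<psi> y = \<alpha> * y + \<beta>" using affine_eq_relu_net1[OF H] by blast
  have "integral {a..b} (\<lambda>y. (relu_net1 H \<psi> y - (\<alpha> * y + \<beta>))^2) = integral {a..b} (\<lambda>_. 0)"
    by (rule integral_cong) (simp add: \<psi>)
  then have zero: "risk1 M f H \<psi> = 0"
    using risk1_eq_integral[OF M_sets M_meas rho f_affine, of H \<psi>] by simp
  have "bdd_below (range (risk1 M f H))" using risk_nonneg by (rule bdd_belowI2)
  then have "(INF \<theta>. risk1 M f H \<theta>) \<le> 0"
    using cINF_lower[of "risk1 M f H" UNIV \<psi>] zero by simp
  moreover have "0 \<le> (INF \<theta>. risk1 M f H \<theta>)" by (rule cINF_greatest) (simp_all add: risk_nonneg)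
  ultimately have "(INF \<theta>. risk1 M f H \<theta>) = 0" by (rule antisym)
  then show ?thesis using zero by metis
qed

theorem proposition3p4:
  fixes H :: nat and a b \<alpha> \<beta> \<rho> :: real
    and f :: "real \<Rightarrow> real" and M :: "real measure"
    and R :: "nat \<Rightarrow> real \<Rightarrow> real"
    and G :: "(nat \<Rightarrow> real) \<Rightarrow> nat \<Rightarrow> real"
  assumes H: "H \<ge> 1"
    and ab: "a < b"
    and f_cont: "continuous_on {a..b} f"
    and f_affine: "\<forall>x\<in>{a..b}. f x = \<alpha> * x + \<beta>"
    and rho: "\<rho> > 0"
    and M_sets: "sets M = sets (restrict_space lborel {a..b})"
    and M_meas: "\<forall>E\<in>sets M. emeasure M E = ennreal \<rho> * emeasure lborel E"
    and R_C1: "\<forall>r. R r C1_differentiable_on UNIV"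
    and R_lim: "\<forall>x. (\<lambda>r. \<bar>R r x - max x 0\<bar> + \<bar>deriv (R r) x - indicator {0<..} x\<bar>)
                    \<longlonglongrightarrow> 0"
    and R_bdd: "\<forall>x. \<exists>C. \<forall>r. \<forall>y\<in>{-\<bar>x\<bar>..\<bar>x\<bar>}. \<bar>deriv (R r) y\<bar> \<le> C"
    and G_def: "\<forall>\<theta>. (\<forall>k\<in>{1..3*H+1}. convergent (\<lambda>r. risk1_approx_grad M f H (R r) \<theta> k))
                  \<longrightarrow> (\<forall>k\<in>{1..3*H+1}. (\<lambda>r. risk1_approx_grad M f H (R r) \<theta> k) \<longlonglongrightarrow> G \<theta> k)"
  shows "(\<exists>\<psi>. risk1 M f H \<psi> = (INF \<theta>. risk1 M f H \<theta>) \<and> (INF \<theta>. risk1 M f H \<theta>) = 0)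
       \<and> (\<forall>\<theta>. (\<forall>k\<in>{1..3*H+1}. G \<theta> k = 0) \<and> risk1 M f H \<theta> > 0 \<longrightarrow>
            risk1 M f H \<theta> \<ge> \<rho> * \<alpha>\<^sup>2 * (b - a) ^ 3 /
              (12 * (2 * real_of_int \<lfloor>real H / 2\<rfloor> + 1) ^ 4))"
proof -
  have "\<rho> * \<alpha>\<^sup>2 * (b - a) ^ 3 / (12 * (2 * real_of_int \<lfloor>real H / 2\<rfloor> + 1) ^ 4) \<le> risk1 M f H \<theta>"
    if "\<forall>k\<in>{1..3*H+1}. G \<theta> k = 0" "0 < risk1 M f H \<theta>" for \<theta>
  proof -
    interpret relu_critical_point a b \<alpha> \<beta> "\<theta> (3*H+1)" H "\<lambda>i. \<theta> i" "\<lambda>i. \<theta> (H+i)" "\<lambda>i. \<theta> (2*H+i)"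
        "\<lambda>y. relu_net1 H \<theta> y - (\<alpha> * y + \<beta>)"
      using relu_critical_point_if_gradient_zero[OF ab f_affine rho M_sets M_meas R_C1 R_lim R_bdd G_def that] .
    show ?thesis
      using mult_left_mono[OF integral_residual_sq_ge, of \<rho>] rho risk1_eq_integral[OF M_sets M_meas _ f_affine]
      by simp
  qed
  moreover have "\<exists>\<psi>. risk1 M f H \<psi> = (INF \<theta>. risk1 M f H \<theta>) \<and> (INF \<theta>. risk1 M f H \<theta>) = 0"
    using rho by (intro risk1_attains_zero_infimum[OF H M_sets M_meas _ f_affine]) simp
  ultimately show ?thesis by auto
qed

end
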